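(* Let $\Phi$ be an Orlicz function and $p$ a lattice norm on $\mathbb{R}^2$ with $p((1,0))=1$. Then the functional $$\|x\|_{\Phi,p}=\inf_{k>0}\frac1k\,p\big((1,I_\Phi(kx))\big),\qquad x\in L^\Phi(\mu),$$ is a norm on $L^\Phi(\mu)$.
   Context: $(\Omega,\Sigma,\mu)$ is a $\sigma$-finite complete measure space and $L^0$ denotes the space of (classes of $\mu$-a.e. equal) real-valued $\Sigma$-measurable functions on $\Omega$. An Orlicz function is a function $\Phi:\mathbb{R}\to[0,\infty)$ which is convex, even, vanishes at $0$ and is not identically zero. For $x\in L^0$, $I_\Phi(x)=\int_\Omega\Phi(x(t))\,d\mu\in[0,+\infty]$. The Orlicz space is $L^\Phi(\mu)=\{x\in L^0: I_\Phi(\lambda x)<\infty\text{ for some }\lambda>0\}$. A lattice norm on $\mathbb{R}^2$ is a norm $p$ such that $p((u,v))\le p((u',v'))$ whenever $|u|\le|u'|$, $|v|\le|v'|$. In the formula for $\|x\|_{\Phi,p}$ the convention $p((1,+\infty))=+\infty$ is used. *)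

theory Defs
  imports "HOL-Analysis.Analysis"
begin

definition orlicz_function :: "(real \<Rightarrow> real) \<Rightarrow> bool" where
  "orlicz_function \<Phi> \<longleftrightarrow> convex_on UNIV \<Phi> \<and> (\<forall>u. \<Phi> (- u) = \<Phi> u) \<and> \<Phi> 0 = 0
     \<and> (\<forall>u. 0 \<le> \<Phi> u) \<and> (\<exists>u. \<Phi> u \<noteq> 0)"

definition orlicz_modular :: "'a measure \<Rightarrow> (real \<Rightarrow> real) \<Rightarrow> ('a \<Rightarrow> real) \<Rightarrow> ennreal" where
  "orlicz_modular M \<Phi> x = (\<integral>\<^sup>+ t. ennreal (\<Phi> (x t)) \<partial>M)"

definition orlicz_space :: "'a measure \<Rightarrow> (real \<Rightarrow> real) \<Rightarrow> ('a \<Rightarrow> real) set" where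
  "orlicz_space M \<Phi> = {x \<in> borel_measurable M. \<exists>l>0. orlicz_modular M \<Phi> (\<lambda>t. l * x t) < \<infinity>}"

definition lattice_norm_R2 :: "(real \<times> real \<Rightarrow> real) \<Rightarrow> bool" where
  "lattice_norm_R2 p \<longleftrightarrow>
     (\<forall>v. p v = 0 \<longleftrightarrow> v = (0, 0)) \<and>
     (\<forall>c u v. p (c * u, c * v) = \<bar>c\<bar> * p (u, v)) \<and>
     (\<forall>u v u' v'. p (u + u', v + v') \<le> p (u, v) + p (u', v')) \<and>
     (\<forall>u v u' v'. \<bar>u\<bar> \<le> \<bar>u'\<bar> \<longrightarrow> \<bar>v\<bar> \<le> \<bar>v'\<bar> \<longrightarrow> p (u, v) \<le> p (u', v'))"

definition p_ext :: "(real \<times> real \<Rightarrow> real) \<Rightarrow> ennreal \<Rightarrow> ennreal" where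
  "p_ext p s = (if s = \<infinity> then \<infinity> else ennreal (p (1, enn2real s)))"

definition orlicz_p_norm :: "'a measure \<Rightarrow> (real \<Rightarrow> real) \<Rightarrow> (real \<times> real \<Rightarrow> real) \<Rightarrow> ('a \<Rightarrow> real) \<Rightarrow> ennreal" where
  "orlicz_p_norm M \<Phi> p x =
     (INF k\<in>{0<..}. ennreal (1 / k) * p_ext p (orlicz_modular M \<Phi> (\<lambda>t. k * x t)))"

end

theory Submission
  imports Defs
begin

text \<open>
  Homogeneity comes from the substitution \<open>k \<mapsto> k a\<close> in the infimum. For the triangle
  inequality, given \<open>k\<^sub>1, k\<^sub>2 > 0\<close> put \<open>k = k\<^sub>1 k\<^sub>2 / (k\<^sub>1 + k\<^sub>2)\<close>: then \<open>k (x + y)\<close> is a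
  convex combination of \<open>k\<^sub>1 x\<close> and \<open>k\<^sub>2 y\<close> with weights \<open>k/k\<^sub>1\<close>, \<open>k/k\<^sub>2\<close>, so convexity of the
  modular and convexity and monotonicity of \<open>s \<mapsto> p (1, s)\<close> give
  \<open>p (1, I(k (x + y)))/k \<le> p (1, I(k\<^sub>1 x))/k\<^sub>1 + p (1, I(k\<^sub>2 y))/k\<^sub>2\<close>.
  For definiteness, \<open>p (1, s) \<ge> max 1 (s p (0, 1))\<close>: small \<open>k\<close> cost at least \<open>1/k\<close>, while
  for large \<open>k\<close> the at least linear growth of \<open>\<Phi>\<close> makes \<open>I(k x)/k\<close> bounded below as soon
  as \<open>|x| \<ge> \<epsilon>\<close> on a set of positive measure.
\<close>

lemma lattice_norm_R2_nonneg:
  assumes "lattice_norm_R2 p" shows "0 \<le> p v"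
proof -
  obtain u w where v: "v = (u, w)" by (cases v)
  have "p (0, 0) = 0" using assms unfolding lattice_norm_R2_def by blast
  moreover have "p (u + - u, w + - w) \<le> p (u, w) + p (- u, - w)"
    using assms unfolding lattice_norm_R2_def by blast
  moreover have "p (- u, - w) = p (u, w)"
    using assms unfolding lattice_norm_R2_def
    by (metis abs_minus_cancel abs_one mult_1 mult_minus_left)
  ultimately show ?thesis using v by simp
qed

lemma lattice_norm_R2_mono_snd:
  assumes "lattice_norm_R2 p" "0 \<le> s" "s \<le> s'" shows "p (1, s) \<le> p (1, s')"
  using assms unfolding lattice_norm_R2_def by auto

lemma lattice_norm_R2_snd_le:
  assumes "lattice_norm_R2 p" "0 \<le> s" shows "s * p (0, 1) \<le> p (1, s)"
proof -
  have "p (s * 0, s * 1) = \<bar>s\<bar> * p (0, 1)" using assms unfolding lattice_norm_R2_def by blast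
  moreover have "p (s * 0, s * 1) \<le> p (1, s)" using assms unfolding lattice_norm_R2_def by auto
  ultimately show ?thesis using assms by simp
qed

lemma lattice_norm_R2_pos_01:
  assumes "lattice_norm_R2 p" shows "0 < p (0, 1)"
proof -
  have "p (0, 1) \<noteq> 0" using assms unfolding lattice_norm_R2_def by auto
  thus ?thesis using lattice_norm_R2_nonneg[OF assms, of "(0, 1)"] by simp
qed

lemma lattice_norm_R2_convex_snd:
  assumes "lattice_norm_R2 p" "0 \<le> a" "0 \<le> b" "a + b = 1"
  shows "p (1, a * r + b * s) \<le> a * p (1, r) + b * p (1, s)"
proof -
  have "p (a * 1 + b * 1, a * r + b * s) \<le> p (a * 1, a * r) + p (b * 1, b * s)"
    using assms unfolding lattice_norm_R2_def by blast
  moreover have "p (a * 1, a * r) = a * p (1, r)" "p (b * 1, b * s) = b * p (1, s)"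
    using assms unfolding lattice_norm_R2_def by (metis abs_of_nonneg)+
  ultimately show ?thesis using assms by simp
qed

lemma p_ext_ge_1:
  assumes "lattice_norm_R2 p" "p (1, 0) = 1" shows "1 \<le> p_ext p s"
proof (cases "s = \<infinity>")
  case False
  have "1 \<le> p (1, enn2real s)"
    using lattice_norm_R2_mono_snd[OF assms(1), of 0 "enn2real s"] assms(2) by simp
  thus ?thesis using False unfolding p_ext_def by simp
qed (simp add: p_ext_def)

lemma p_ext_ge_linear:
  assumes "lattice_norm_R2 p" shows "s * ennreal (p (0, 1)) \<le> p_ext p s"
proof (cases "s = \<infinity>")
  case False
  then obtain r where r: "s = ennreal r" "0 \<le> r" by (cases s rule: ennreal_cases) auto
  have "ennreal (r * p (0, 1)) \<le> ennreal (p (1, r))"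
    using lattice_norm_R2_snd_le[OF assms r(2)] by (rule ennreal_leI)
  thus ?thesis
    using r lattice_norm_R2_pos_01[OF assms] unfolding p_ext_def by (simp add: ennreal_mult)
qed (simp add: p_ext_def)

lemma orlicz_function_measurable:
  assumes "orlicz_function \<Phi>" "f \<in> borel_measurable M"
  shows "(\<lambda>t. \<Phi> (f t)) \<in> borel_measurable M"
proof -
  have "continuous_on UNIV \<Phi>"
    using assms(1) convex_on_continuous[of UNIV \<Phi>] unfolding orlicz_function_def by auto
  thus ?thesis using borel_measurable_continuous_on assms(2) by blast
qed

lemma orlicz_function_convex_comb:
  assumes "orlicz_function \<Phi>" "0 \<le> a" "0 \<le> b" "a + b = 1"
  shows "\<Phi> (a * u + b * v) \<le> a * \<Phi> u + b * \<Phi> v"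
proof -
  have "convex_on UNIV \<Phi>" "b \<le> 1" "a = 1 - b" using assms unfolding orlicz_function_def by auto
  thus ?thesis using convex_onD[of UNIV \<Phi> b u v] assms(3) by simp
qed

lemma orlicz_function_abs: assumes "orlicz_function \<Phi>" shows "\<Phi> \<bar>u\<bar> = \<Phi> u"
  using assms unfolding orlicz_function_def by (cases "u \<ge> 0") auto

text \<open>By convexity and \<open>\<Phi> 0 = 0\<close>, \<open>\<Phi> u / |u|\<close> is nondecreasing in \<open>|u|\<close>.\<close>

lemma orlicz_function_linear_lower_bound:
  assumes "orlicz_function \<Phi>"
  obtains u\<^sub>0 b where "u\<^sub>0 > 0" "b > 0" "\<And>u. u\<^sub>0 \<le> \<bar>u\<bar> \<Longrightarrow> b * \<bar>u\<bar> \<le> \<Phi> u"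
proof -
  obtain w where w: "\<Phi> w \<noteq> 0" using assms unfolding orlicz_function_def by blast
  define u\<^sub>0 where "u\<^sub>0 = \<bar>w\<bar>"
  have \<Phi>0: "\<Phi> 0 = 0" using assms unfolding orlicz_function_def by blast
  have pos: "\<Phi> u\<^sub>0 > 0"
    using w assms orlicz_function_abs[OF assms] unfolding orlicz_function_def u\<^sub>0_def
    by (metis less_eq_real_def)
  have u\<^sub>0: "u\<^sub>0 > 0" using w \<Phi>0 u\<^sub>0_def by (cases "w = 0") auto
  have "\<Phi> u\<^sub>0 / u\<^sub>0 * \<bar>u\<bar> \<le> \<Phi> u" if h: "u\<^sub>0 \<le> \<bar>u\<bar>" for u
  proof -
    define a where "a = u\<^sub>0 / \<bar>u\<bar>"
    have ua: "\<bar>u\<bar> > 0" using h u\<^sub>0 by linarith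
    have a: "0 \<le> a" "a \<le> 1" using h u\<^sub>0 ua unfolding a_def by auto
    have "\<Phi> (a * \<bar>u\<bar> + (1 - a) * 0) \<le> a * \<Phi> \<bar>u\<bar> + (1 - a) * \<Phi> 0"
      using orlicz_function_convex_comb[OF assms a(1), of "1 - a" "\<bar>u\<bar>" 0] a by simp
    hence "\<Phi> u\<^sub>0 \<le> a * \<Phi> u" using \<Phi>0 ua orlicz_function_abs[OF assms] unfolding a_def by simp
    thus ?thesis using u\<^sub>0 ua unfolding a_def by (simp add: field_simps)
  qed
  thus ?thesis using u\<^sub>0 pos that[of u\<^sub>0 "\<Phi> u\<^sub>0 / u\<^sub>0"] by auto
qed

lemma orlicz_modular_cong_AE:
  assumes "AE t in M. x t = y t"
  shows "orlicz_modular M \<Phi> x = orlicz_modular M \<Phi> y"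
  unfolding orlicz_modular_def
  by (rule nn_integral_cong_AE) (use assms in \<open>auto elim: eventually_mono\<close>)

lemma orlicz_modular_convex_comb:
  assumes "orlicz_function \<Phi>" "u \<in> borel_measurable M" "v \<in> borel_measurable M"
    and "0 \<le> a" "0 \<le> b" "a + b = 1"
  shows "orlicz_modular M \<Phi> (\<lambda>t. a * u t + b * v t)
    \<le> ennreal a * orlicz_modular M \<Phi> u + ennreal b * orlicz_modular M \<Phi> v"
proof -
  have nonneg: "\<And>r. 0 \<le> \<Phi> r" using assms(1) unfolding orlicz_function_def by blast
  have "orlicz_modular M \<Phi> (\<lambda>t. a * u t + b * v t)
      \<le> (\<integral>\<^sup>+ t. ennreal a * ennreal (\<Phi> (u t)) + ennreal b * ennreal (\<Phi> (v t)) \<partial>M)"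
    unfolding orlicz_modular_def
  proof (rule nn_integral_mono)
    fix t
    have "ennreal (\<Phi> (a * u t + b * v t)) \<le> ennreal (a * \<Phi> (u t) + b * \<Phi> (v t))"
      using orlicz_function_convex_comb[OF assms(1,4-6)] by (rule ennreal_leI)
    thus "ennreal (\<Phi> (a * u t + b * v t))
        \<le> ennreal a * ennreal (\<Phi> (u t)) + ennreal b * ennreal (\<Phi> (v t))"
      using assms(4,5) nonneg by (simp add: ennreal_mult[symmetric] flip: ennreal_plus)
  qed
  also have "\<dots> = ennreal a * orlicz_modular M \<Phi> u + ennreal b * orlicz_modular M \<Phi> v"
  proof -
    have "(\<lambda>t. ennreal (\<Phi> (u t))) \<in> borel_measurable M" "(\<lambda>t. ennreal (\<Phi> (v t))) \<in> borel_measurable M"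
      using orlicz_function_measurable[OF assms(1) assms(2)] orlicz_function_measurable[OF assms(1) assms(3)]
      by simp_all
    thus ?thesis unfolding orlicz_modular_def by (simp add: nn_integral_add nn_integral_cmult)
  qed
  finally show ?thesis .
qed

lemma orlicz_modular_ge_on_set:
  assumes "A \<in> sets M" "0 \<le> c" "\<And>t. t \<in> A \<Longrightarrow> c \<le> \<Phi> (x t)"
  shows "ennreal c * emeasure M A \<le> orlicz_modular M \<Phi> x"
proof -
  have "ennreal c * emeasure M A = (\<integral>\<^sup>+ t. ennreal c * indicator A t \<partial>M)"
    using assms(1) by (simp add: nn_integral_cmult_indicator)
  also have "\<dots> \<le> orlicz_modular M \<Phi> x"
    unfolding orlicz_modular_def using assms(3)
    by (intro nn_integral_mono) (auto simp: indicator_def intro: ennreal_leI)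
  finally show ?thesis .
qed

lemma orlicz_p_norm_cong_AE:
  assumes "AE t in M. x t = y t"
  shows "orlicz_p_norm M \<Phi> p x = orlicz_p_norm M \<Phi> p y"
proof -
  have "AE t in M. k * x t = k * y t" for k :: real using assms by (auto elim: eventually_mono)
  thus ?thesis unfolding orlicz_p_norm_def using orlicz_modular_cong_AE by metis
qed

lemma orlicz_p_norm_eq_0_if_modular_eq_0:
  assumes "p (1, 0) = 1" "\<And>k. orlicz_modular M \<Phi> (\<lambda>t. k * x t) = 0"
  shows "orlicz_p_norm M \<Phi> p x = 0"
proof -
  have "(INF k\<in>{0<..}. ennreal (1 / k)) \<le> 0"
  proof (rule ennreal_le_epsilon)
    fix e :: real assume "0 < e"
    hence "(INF k\<in>{0<..}. ennreal (1 / k)) \<le> ennreal (1 / (1 / e))"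
      by (intro INF_lower) auto
    thus "(INF k\<in>{0<..}. ennreal (1 / k)) \<le> 0 + ennreal e" by simp
  qed
  thus ?thesis unfolding orlicz_p_norm_def using assms by (simp add: p_ext_def)
qed

lemma orlicz_p_norm_finite:
  assumes "x \<in> orlicz_space M \<Phi>" shows "orlicz_p_norm M \<Phi> p x < \<infinity>"
proof -
  obtain l where l: "l > 0" "orlicz_modular M \<Phi> (\<lambda>t. l * x t) < \<infinity>"
    using assms unfolding orlicz_space_def by blast
  have "orlicz_p_norm M \<Phi> p x \<le> ennreal (1 / l) * p_ext p (orlicz_modular M \<Phi> (\<lambda>t. l * x t))"
    unfolding orlicz_p_norm_def using l by (intro INF_lower) auto
  also have "\<dots> < \<infinity>" using l unfolding p_ext_def by (simp add: ennreal_mult_less_top)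
  finally show ?thesis .
qed

lemma orlicz_p_norm_scale_pos_ge:
  assumes "a > 0"
  shows "ennreal a * orlicz_p_norm M \<Phi> p x \<le> orlicz_p_norm M \<Phi> p (\<lambda>t. a * x t)"
  unfolding orlicz_p_norm_def
proof (rule INF_greatest)
  fix k :: real assume "k \<in> {0<..}"
  hence k: "k > 0" by simp
  have "ennreal a * (INF k\<in>{0<..}. ennreal (1 / k) * p_ext p (orlicz_modular M \<Phi> (\<lambda>t. k * x t)))
      \<le> ennreal a * (ennreal (1 / (k * a)) * p_ext p (orlicz_modular M \<Phi> (\<lambda>t. (k * a) * x t)))"
    using k assms by (intro mult_left_mono INF_lower) auto
  also have "\<dots> = ennreal (1 / k) * p_ext p (orlicz_modular M \<Phi> (\<lambda>t. k * (a * x t)))"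
  proof -
    have "ennreal a * ennreal (1 / (k * a)) = ennreal (1 / k)"
      using k assms by (simp flip: ennreal_mult)
    thus ?thesis by (simp add: mult.assoc[symmetric])
  qed
  finally show "ennreal a * (INF k\<in>{0<..}. ennreal (1 / k) * p_ext p (orlicz_modular M \<Phi> (\<lambda>t. k * x t)))
      \<le> ennreal (1 / k) * p_ext p (orlicz_modular M \<Phi> (\<lambda>t. k * (a * x t)))" .
qed

lemma orlicz_p_norm_scale_pos:
  assumes "a > 0"
  shows "orlicz_p_norm M \<Phi> p (\<lambda>t. a * x t) = ennreal a * orlicz_p_norm M \<Phi> p x"
proof (rule antisym)
  have "ennreal a * (ennreal (1 / a) * orlicz_p_norm M \<Phi> p (\<lambda>t. a * x t))
      \<le> ennreal a * orlicz_p_norm M \<Phi> p (\<lambda>t. (1 / a) * (a * x t))"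
    using assms by (intro mult_left_mono orlicz_p_norm_scale_pos_ge) auto
  thus "orlicz_p_norm M \<Phi> p (\<lambda>t. a * x t) \<le> ennreal a * orlicz_p_norm M \<Phi> p x"
    using assms by (simp add: mult.assoc[symmetric] ennreal_mult[symmetric])
qed (rule orlicz_p_norm_scale_pos_ge[OF assms])

lemma orlicz_p_norm_scale:
  assumes "orlicz_function \<Phi>" "p (1, 0) = 1"
  shows "orlicz_p_norm M \<Phi> p (\<lambda>t. c * x t) = ennreal \<bar>c\<bar> * orlicz_p_norm M \<Phi> p x"
proof (cases "c = 0")
  case True
  have "\<Phi> 0 = 0" using assms(1) unfolding orlicz_function_def by blast
  hence "orlicz_p_norm M \<Phi> p (\<lambda>t. c * x t) = 0"
    using True by (intro orlicz_p_norm_eq_0_if_modular_eq_0[where p=p, OF assms(2)]) (simp add: orlicz_modular_def)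
  thus ?thesis using True by simp
next
  case False
  have "\<Phi> (k * (c * x t)) = \<Phi> (k * (\<bar>c\<bar> * x t))" for k t
    using orlicz_function_abs[OF assms(1)] by (metis abs_abs abs_mult)
  hence "orlicz_p_norm M \<Phi> p (\<lambda>t. c * x t) = orlicz_p_norm M \<Phi> p (\<lambda>t. \<bar>c\<bar> * x t)"
    unfolding orlicz_p_norm_def orlicz_modular_def by simp
  also have "\<dots> = ennreal \<bar>c\<bar> * orlicz_p_norm M \<Phi> p x"
    using False by (intro orlicz_p_norm_scale_pos) simp
  finally show ?thesis .
qed

lemma ennreal_le_INF_add_INF:
  fixes f g :: "'i \<Rightarrow> ennreal"
  assumes "\<And>i j. i \<in> I \<Longrightarrow> j \<in> J \<Longrightarrow> z \<le> f i + g j"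
  shows "z \<le> (INF i\<in>I. f i) + (INF j\<in>J. g j)"
proof (rule ennreal_le_epsilon)
  fix e :: real assume fin: "(INF i\<in>I. f i) + (INF j\<in>J. g j) < top" and "0 < e"
  have near: "\<exists>i\<in>K. h i < (INF i\<in>K. h i) + ennreal (e / 2)"
    if "(INF i\<in>K. h i) < top" for K and h :: "'i \<Rightarrow> ennreal"
  proof -
    have less_add: "y < y + ennreal (e / 2)" if "y < top" for y :: ennreal
      using ennreal_add_left_cancel_less[of y 0 "ennreal (e / 2)"] that \<open>0 < e\<close> by simp
    have "(INF i\<in>K. h i) < (INF i\<in>K. h i) + ennreal (e / 2)" by (rule less_add[OF that])
    thus ?thesis by (simp only: INF_less_iff)
  qed
  obtain i j where "i \<in> I" "f i < (INF i\<in>I. f i) + ennreal (e / 2)"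
    and "j \<in> J" "g j < (INF j\<in>J. g j) + ennreal (e / 2)"
    using near[of f I] near[of g J] fin by (auto simp: top_add add_top)
  hence "z \<le> ((INF i\<in>I. f i) + ennreal (e / 2)) + ((INF j\<in>J. g j) + ennreal (e / 2))"
    using assms by (meson add_mono order.trans less_imp_le)
  also have "\<dots> = (INF i\<in>I. f i) + (INF j\<in>J. g j) + ennreal e"
    using \<open>0 < e\<close> by (simp add: ac_simps flip: ennreal_plus)
  finally show "z \<le> (INF i\<in>I. f i) + (INF j\<in>J. g j) + ennreal e" .
qed

lemma orlicz_p_norm_add_le:
  assumes p: "lattice_norm_R2 p" and \<Phi>: "orlicz_function \<Phi>"
    and x: "x \<in> borel_measurable M" and y: "y \<in> borel_measurable M"
    and k\<^sub>1: "k\<^sub>1 > 0" and k\<^sub>2: "k\<^sub>2 > 0"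
  shows "orlicz_p_norm M \<Phi> p (\<lambda>t. x t + y t)
    \<le> ennreal (1 / k\<^sub>1) * p_ext p (orlicz_modular M \<Phi> (\<lambda>t. k\<^sub>1 * x t))
      + ennreal (1 / k\<^sub>2) * p_ext p (orlicz_modular M \<Phi> (\<lambda>t. k\<^sub>2 * y t))"
    (is "_ \<le> ?rhs")
proof (cases "orlicz_modular M \<Phi> (\<lambda>t. k\<^sub>1 * x t) = \<infinity> \<or> orlicz_modular M \<Phi> (\<lambda>t. k\<^sub>2 * y t) = \<infinity>")
  case True
  hence "?rhs = \<infinity>" using k\<^sub>1 k\<^sub>2 by (auto simp: p_ext_def ennreal_mult_eq_top_iff)
  thus ?thesis unfolding infinity_ennreal_def by (simp only: top_greatest)
next
  case False
  then obtain r\<^sub>1 r\<^sub>2 where r\<^sub>1: "orlicz_modular M \<Phi> (\<lambda>t. k\<^sub>1 * x t) = ennreal r\<^sub>1" "0 \<le> r\<^sub>1"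
    and r\<^sub>2: "orlicz_modular M \<Phi> (\<lambda>t. k\<^sub>2 * y t) = ennreal r\<^sub>2" "0 \<le> r\<^sub>2"
    by (metis ennreal_cases infinity_ennreal_def)
  define k where "k = k\<^sub>1 * k\<^sub>2 / (k\<^sub>1 + k\<^sub>2)"
  define a where "a = k\<^sub>2 / (k\<^sub>1 + k\<^sub>2)"
  define b where "b = k\<^sub>1 / (k\<^sub>1 + k\<^sub>2)"
  have k: "k > 0" using k\<^sub>1 k\<^sub>2 unfolding k_def by simp
  have ab: "0 \<le> a" "0 \<le> b" "a + b = 1"
    using k\<^sub>1 k\<^sub>2 unfolding a_def b_def by (auto simp: add_divide_distrib[symmetric])
  have weights: "a * k\<^sub>1 = k" "b * k\<^sub>2 = k"
    unfolding a_def b_def k_def by (simp_all add: mult.commute)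
  hence "k * (x t + y t) = a * (k\<^sub>1 * x t) + b * (k\<^sub>2 * y t)" for t
    by (metis distrib_left mult.assoc)
  hence "orlicz_modular M \<Phi> (\<lambda>t. k * (x t + y t))
      \<le> ennreal a * ennreal r\<^sub>1 + ennreal b * ennreal r\<^sub>2"
    using orlicz_modular_convex_comb[OF \<Phi> _ _ ab, of "\<lambda>t. k\<^sub>1 * x t" M "\<lambda>t. k\<^sub>2 * y t"] x y r\<^sub>1 r\<^sub>2
    by simp
  also have "\<dots> = ennreal (a * r\<^sub>1 + b * r\<^sub>2)"
    using ab r\<^sub>1 r\<^sub>2 by (simp add: ennreal_mult[symmetric] flip: ennreal_plus)
  finally have I: "orlicz_modular M \<Phi> (\<lambda>t. k * (x t + y t)) \<le> ennreal (a * r\<^sub>1 + b * r\<^sub>2)" .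
  then obtain s where s: "orlicz_modular M \<Phi> (\<lambda>t. k * (x t + y t)) = ennreal s" "0 \<le> s"
    by (cases "orlicz_modular M \<Phi> (\<lambda>t. k * (x t + y t))" rule: ennreal_cases) (auto simp: top_unique)
  have "0 \<le> a * r\<^sub>1 + b * r\<^sub>2" using ab r\<^sub>1 r\<^sub>2 by simp
  hence "s \<le> a * r\<^sub>1 + b * r\<^sub>2" using I unfolding s(1) by (simp only: ennreal_le_iff)
  hence "p (1, s) \<le> p (1, a * r\<^sub>1 + b * r\<^sub>2)" by (rule lattice_norm_R2_mono_snd[OF p s(2)])
  also have "\<dots> \<le> a * p (1, r\<^sub>1) + b * p (1, r\<^sub>2)" by (rule lattice_norm_R2_convex_snd[OF p ab])
  finally have "1 / k * p (1, s) \<le> 1 / k * (a * p (1, r\<^sub>1) + b * p (1, r\<^sub>2))"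
    using k by (intro mult_left_mono) auto
  also have "\<dots> = (a / k) * p (1, r\<^sub>1) + (b / k) * p (1, r\<^sub>2)" by (simp add: add_divide_distrib)
  also have "a / k = 1 / k\<^sub>1" using k k\<^sub>1 unfolding weights(1)[symmetric] by (auto simp: field_simps)
  also have "b / k = 1 / k\<^sub>2" using k k\<^sub>2 unfolding weights(2)[symmetric] by (auto simp: field_simps)
  finally have "1 / k * p (1, s) \<le> 1 / k\<^sub>1 * p (1, r\<^sub>1) + 1 / k\<^sub>2 * p (1, r\<^sub>2)" .
  hence "ennreal (1 / k) * p_ext p (orlicz_modular M \<Phi> (\<lambda>t. k * (x t + y t))) \<le> ?rhs"
    using s r\<^sub>1 r\<^sub>2 k k\<^sub>1 k\<^sub>2 lattice_norm_R2_nonneg[OF p]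
    by (simp add: p_ext_def ennreal_mult[symmetric] flip: ennreal_plus)
  moreover have "orlicz_p_norm M \<Phi> p (\<lambda>t. x t + y t)
      \<le> ennreal (1 / k) * p_ext p (orlicz_modular M \<Phi> (\<lambda>t. k * (x t + y t)))"
    unfolding orlicz_p_norm_def using k by (intro INF_lower) auto
  ultimately show ?thesis by order
qed

lemma orlicz_p_norm_triangle:
  assumes "lattice_norm_R2 p" "orlicz_function \<Phi>"
    and "x \<in> borel_measurable M" "y \<in> borel_measurable M"
  shows "orlicz_p_norm M \<Phi> p (\<lambda>t. x t + y t) \<le> orlicz_p_norm M \<Phi> p x + orlicz_p_norm M \<Phi> p y"
  unfolding orlicz_p_norm_def[of M \<Phi> p x] orlicz_p_norm_def[of M \<Phi> p y]
  using orlicz_p_norm_add_le[OF assms] by (intro ennreal_le_INF_add_INF) simp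

lemma exists_level_set_not_null:
  assumes "x \<in> borel_measurable M" "\<not> (AE t in M. x t = 0)"
  obtains \<epsilon> :: real where "\<epsilon> > 0" "{t \<in> space M. \<epsilon> \<le> \<bar>x t\<bar>} \<notin> null_sets M"
proof -
  define S where "S n = {t \<in> space M. inverse (real (Suc n)) \<le> \<bar>x t\<bar>}" for n
  have "{t \<in> space M. x t \<noteq> 0} \<subseteq> (\<Union>n. S n)"
  proof
    fix t assume "t \<in> {t \<in> space M. x t \<noteq> 0}"
    hence t: "t \<in> space M" "0 < \<bar>x t\<bar>" by auto
    then obtain n where "inverse (real (Suc n)) < \<bar>x t\<bar>" using reals_Archimedean by blast
    thus "t \<in> (\<Union>n. S n)" using t unfolding S_def by (auto intro: less_imp_le)
  qed
  hence "(\<Union>n. S n) \<notin> null_sets M" using assms(2) AE_I'[of "\<Union>n. S n" M "\<lambda>t. x t = 0"] by blast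
  then obtain n where "S n \<notin> null_sets M" using null_sets_UN by blast
  thus ?thesis using that[of "inverse (real (Suc n))"] unfolding S_def by simp
qed

lemma orlicz_p_norm_pos_if_ge_on_set:
  assumes p: "lattice_norm_R2 p" and p1: "p (1, 0) = 1" and \<Phi>: "orlicz_function \<Phi>"
    and A: "A \<in> sets M" "emeasure M A \<noteq> 0"
    and \<epsilon>: "\<epsilon> > 0" "\<And>t. t \<in> A \<Longrightarrow> \<epsilon> \<le> \<bar>x t\<bar>"
  shows "0 < orlicz_p_norm M \<Phi> p x"
proof -
  obtain u\<^sub>0 c where u\<^sub>0: "u\<^sub>0 > 0" and c: "c > 0" and growth: "\<And>u. u\<^sub>0 \<le> \<bar>u\<bar> \<Longrightarrow> c * \<bar>u\<bar> \<le> \<Phi> u"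
    using orlicz_function_linear_lower_bound[OF \<Phi>] by blast
  define K where "K = u\<^sub>0 / \<epsilon>"
  define \<delta> where "\<delta> = min (ennreal (1 / K)) (ennreal (c * \<epsilon> * p (0, 1)) * emeasure M A)"
  have K: "K > 0" unfolding K_def using u\<^sub>0 \<epsilon> by simp
  have "0 < \<delta>" unfolding \<delta>_def using K c \<epsilon> A lattice_norm_R2_pos_01[OF p]
    by (auto simp: ennreal_zero_less_mult_iff zero_less_iff_neq_zero)
  also have "\<delta> \<le> ennreal (1 / k) * p_ext p (orlicz_modular M \<Phi> (\<lambda>t. k * x t))" if k: "k > 0" for k
  proof (cases "k < K")
    case True
    have "\<delta> \<le> ennreal (1 / k) * 1"
      unfolding \<delta>_def using True k by (auto intro!: ennreal_leI divide_left_mono min.coboundedI1)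
    also have "\<dots> \<le> ennreal (1 / k) * p_ext p (orlicz_modular M \<Phi> (\<lambda>t. k * x t))"
      by (intro mult_left_mono p_ext_ge_1[OF p p1]) simp
    finally show ?thesis .
  next
    case False
    have "c * (k * \<epsilon>) \<le> \<Phi> (k * x t)" if "t \<in> A" for t
    proof -
      have "k * \<epsilon> \<le> \<bar>k * x t\<bar>" using \<epsilon>(2)[OF that] k by (simp add: abs_mult)
      moreover have "u\<^sub>0 \<le> k * \<epsilon>" using False \<epsilon>(1) unfolding K_def by (simp add: field_simps)
      ultimately show ?thesis using growth[of "k * x t"] c by (meson mult_left_mono order.trans less_imp_le)
    qed
    hence "ennreal (c * (k * \<epsilon>)) * emeasure M A \<le> orlicz_modular M \<Phi> (\<lambda>t. k * x t)"
      using A(1) c k \<epsilon>(1) by (intro orlicz_modular_ge_on_set) auto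
    hence "ennreal (1 / k) * (ennreal (c * (k * \<epsilon>)) * emeasure M A * ennreal (p (0, 1)))
        \<le> ennreal (1 / k) * p_ext p (orlicz_modular M \<Phi> (\<lambda>t. k * x t))"
      by (intro mult_left_mono order.trans[OF mult_right_mono p_ext_ge_linear[OF p]]) auto
    moreover have "ennreal (1 / k) * (ennreal (c * (k * \<epsilon>)) * emeasure M A * ennreal (p (0, 1)))
        = ennreal (c * \<epsilon> * p (0, 1)) * emeasure M A"
      using k c \<epsilon>(1) lattice_norm_R2_pos_01[OF p] by (simp add: ac_simps flip: ennreal_mult)
    ultimately show ?thesis unfolding \<delta>_def by (auto intro: min.coboundedI2 order.trans)
  qed
  hence "\<delta> \<le> orlicz_p_norm M \<Phi> p x" unfolding orlicz_p_norm_def by (intro INF_greatest) simp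
  finally show ?thesis .
qed

lemma orlicz_p_norm_eq_0_iff:
  assumes "lattice_norm_R2 p" "p (1, 0) = 1" "orlicz_function \<Phi>" "x \<in> borel_measurable M"
  shows "orlicz_p_norm M \<Phi> p x = 0 \<longleftrightarrow> (AE t in M. x t = 0)"
proof
  assume "orlicz_p_norm M \<Phi> p x = 0"
  show "AE t in M. x t = 0"
  proof (rule ccontr)
    assume "\<not> (AE t in M. x t = 0)"
    then obtain \<epsilon> where "\<epsilon> > 0" "{t \<in> space M. \<epsilon> \<le> \<bar>x t\<bar>} \<notin> null_sets M"
      using exists_level_set_not_null[OF assms(4)] by blast
    moreover have "{t \<in> space M. \<epsilon> \<le> \<bar>x t\<bar>} \<in> sets M" using assms(4) by measurable
    ultimately have "0 < orlicz_p_norm M \<Phi> p x"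
      by (intro orlicz_p_norm_pos_if_ge_on_set[OF assms(1-3)]) (auto simp: null_sets_def)
    thus False using \<open>orlicz_p_norm M \<Phi> p x = 0\<close> by simp
  qed
next
  assume "AE t in M. x t = 0"
  hence "orlicz_p_norm M \<Phi> p x = orlicz_p_norm M \<Phi> p (\<lambda>t. 0 * x t)"
    by (intro orlicz_p_norm_cong_AE) (auto elim: eventually_mono)
  also have "\<dots> = 0" using orlicz_p_norm_scale[where p=p and c=0, OF assms(3,2)] by simp
  finally show "orlicz_p_norm M \<Phi> p x = 0" .
qed

theorem theorem2:
  fixes M :: "'a measure" and \<Phi> :: "real \<Rightarrow> real" and p :: "real \<times> real \<Rightarrow> real"
  assumes "sigma_finite_measure M" and "complete_measure M"
    and "orlicz_function \<Phi>"
    and "lattice_norm_R2 p" and "p (1, 0) = 1"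
  shows
    "(\<forall>x\<in>orlicz_space M \<Phi>. \<forall>y\<in>orlicz_space M \<Phi>. (AE t in M. x t = y t) \<longrightarrow>
        orlicz_p_norm M \<Phi> p x = orlicz_p_norm M \<Phi> p y)
   \<and> (\<forall>x\<in>orlicz_space M \<Phi>. orlicz_p_norm M \<Phi> p x < \<infinity>)
   \<and> (\<forall>x\<in>orlicz_space M \<Phi>. orlicz_p_norm M \<Phi> p x = 0 \<longleftrightarrow> (AE t in M. x t = 0))
   \<and> (\<forall>x\<in>orlicz_space M \<Phi>. \<forall>c::real.
        orlicz_p_norm M \<Phi> p (\<lambda>t. c * x t) = ennreal \<bar>c\<bar> * orlicz_p_norm M \<Phi> p x)
   \<and> (\<forall>x\<in>orlicz_space M \<Phi>. \<forall>y\<in>orlicz_space M \<Phi>.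
        orlicz_p_norm M \<Phi> p (\<lambda>t. x t + y t) \<le> orlicz_p_norm M \<Phi> p x + orlicz_p_norm M \<Phi> p y)"
proof (intro conjI ballI allI impI)
  fix x y assume "x \<in> orlicz_space M \<Phi>" "y \<in> orlicz_space M \<Phi>" "AE t in M. x t = y t"
  thus "orlicz_p_norm M \<Phi> p x = orlicz_p_norm M \<Phi> p y" by (intro orlicz_p_norm_cong_AE)
next
  fix x assume "x \<in> orlicz_space M \<Phi>"
  thus "orlicz_p_norm M \<Phi> p x < \<infinity>" by (rule orlicz_p_norm_finite)
next
  fix x assume "x \<in> orlicz_space M \<Phi>"
  thus "orlicz_p_norm M \<Phi> p x = 0 \<longleftrightarrow> (AE t in M. x t = 0)"
    using orlicz_p_norm_eq_0_iff[OF assms(4,5,3)] unfolding orlicz_space_def by blast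
next
  fix x c assume "x \<in> orlicz_space M \<Phi>"
  show "orlicz_p_norm M \<Phi> p (\<lambda>t. c * x t) = ennreal \<bar>c\<bar> * orlicz_p_norm M \<Phi> p x"
    by (rule orlicz_p_norm_scale[where p=p, OF assms(3,5)])
next
  fix x y assume "x \<in> orlicz_space M \<Phi>" "y \<in> orlicz_space M \<Phi>"
  thus "orlicz_p_norm M \<Phi> p (\<lambda>t. x t + y t) \<le> orlicz_p_norm M \<Phi> p x + orlicz_p_norm M \<Phi> p y"
    using orlicz_p_norm_triangle[OF assms(4,3)] unfolding orlicz_space_def by blast
qed

end
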